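(* Let $N>0$, $m>0$, $F>0$, $\alpha>0$, $w>0$, $\tau\in(0,1)$, $g\geq 0$, $L_g\geq 0$, and define \[ L=\frac{N\left[(1-\tau)(mL_g+\alpha F)+(mg+F)mN\right]}{\alpha+(Nm-\alpha)\tau},\qquad q=\frac{(1-\tau)(L+L_g-\alpha g)}{\left(Nm+\alpha(1-\tau)\right)(L+L_g)}, \] \[ p=\frac{L+L_g}{L+L_g-\alpha g}\left(mw+\frac{\alpha(1-\tau)w}{N}\right),\qquad \Pi=\left((L+L_g)q+g\right)(p-mw)-Fw . \] Assume $Nm>\alpha$. If \[ F\leq \frac{\alpha\left((L+L_g)q+g\right)L}{(L+L_g)N}, \] then $\Pi\geq 0$.
   Context: These are the symmetric-equilibrium quantities of a monopolistic-competition general equilibrium model: $N$ is the measure of firms, $m$ and $F$ the marginal and fixed labor inputs, $\alpha$ the CARA utility parameter, $w$ the nominal wage, $\tau$ the income tax rate, $g$ the government purchase of each variety, $L_g$ government employment, $L$ private employment, $q$ per-capita consumption of each variety, $p$ the common price, and $\Pi$ the profit of each firm. *)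

theory Defs
  imports Complex_Main
begin

end

theory Submission
  imports Defs
begin

text \<open>Write \<open>S = L + L\<^sub>g\<close>, \<open>D = S - \<alpha> g\<close>, \<open>K = N m + \<alpha> (1 - \<tau>)\<close> and
\<open>X = (1 - \<tau>) S + N m g\<close>. Demand per variety is \<open>S q + g = X / K\<close> and the markup is
\<open>p - m w = \<alpha> w X / (N D)\<close>, so \<open>\<Pi> = w (\<alpha> X\<^sup>2 - N F K D) / (N K D)\<close>. The labour-market
equation defining \<open>L\<close> turns the numerator into \<open>K / (N m)\<close> times \<open>\<alpha> X L - N F K S\<close>, which is
\<open>N K S\<close> times the slack in the hypothesis on \<open>F\<close>. Hence \<open>\<Pi>\<close> is a positive multiple of that
slack, positivity of \<open>D\<close> coming from \<open>L > N m g > \<alpha> g\<close>.\<close>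

lemma private_employment_gt:
  fixes N m F \<alpha> \<tau> g Lg L :: real
  assumes "N > 0" and "m > 0" and "F > 0" and "\<alpha> > 0" and "0 \<le> \<tau>" and "\<tau> \<le> 1"
    and "g \<ge> 0" and "Lg \<ge> 0" and "N * m > \<alpha>"
    and labour: "L * (\<alpha> + (N * m - \<alpha>) * \<tau>)
                   = N * ((1 - \<tau>) * (m * Lg + \<alpha> * F) + (m * g + F) * m * N)"
  shows "L > N * m * g"
proof -
  define c where "c = \<alpha> + (N * m - \<alpha>) * \<tau>"
  have c_pos: "c > 0"
    unfolding c_def using assms by (simp add: add_pos_nonneg)
  have c_le: "c \<le> N * m"
    unfolding c_def using assms by (smt (verit) mult_left_le)
  have "N * ((1 - \<tau>) * (m * Lg + \<alpha> * F)) \<ge> 0"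
    using assms by (simp add: add_nonneg_nonneg)
  moreover have "N * m * (N * m * g) < N * ((m * g + F) * m * N)"
    using assms by (simp add: algebra_simps)
  ultimately have below: "N * m * (N * m * g) < L * c"
    unfolding labour[folded c_def] by (simp add: algebra_simps)
  have "L > 0"
    using below c_pos assms by (smt (verit) zero_less_mult_iff zero_le_mult_iff)
  then have "L * c \<le> N * m * L"
    using mult_left_mono[OF c_le, of L] by (simp add: mult.commute)
  with below have "N * m * (N * m * g) < N * m * L"
    by linarith
  then show ?thesis
    using \<open>N > 0\<close> \<open>m > 0\<close> by simp
qed

lemma profit_eq_fixed_cost_slack:
  fixes N m F \<alpha> w \<tau> g Lg L :: real
  defines "S \<equiv> L + Lg" and "D \<equiv> L + Lg - \<alpha> * g" and "K \<equiv> N * m + \<alpha> * (1 - \<tau>)"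
    and "q \<equiv> (1 - \<tau>) * (L + Lg - \<alpha> * g) / ((N * m + \<alpha> * (1 - \<tau>)) * (L + Lg))"
    and "p \<equiv> (L + Lg) / (L + Lg - \<alpha> * g) * (m * w + \<alpha> * (1 - \<tau>) * w / N)"
  assumes "N \<noteq> 0" and "m \<noteq> 0" and "S \<noteq> 0" and "D \<noteq> 0" and "K \<noteq> 0"
    and labour: "L * (\<alpha> + (N * m - \<alpha>) * \<tau>)
                   = N * ((1 - \<tau>) * (m * Lg + \<alpha> * F) + (m * g + F) * m * N)"
  shows "(S * q + g) * (p - m * w) - F * w
           = w * K * S / (N * m * D) * (\<alpha> * (S * q + g) * L / (S * N) - F)"
proof -
  define X where "X = (1 - \<tau>) * S + N * m * g"
  have D_eq: "D = S - \<alpha> * g"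
    unfolding D_def S_def by simp
  have q_eq: "q = (1 - \<tau>) * D / (K * S)" and p_eq: "p = S / D * (m * w + \<alpha> * (1 - \<tau>) * w / N)"
    unfolding q_def p_def D_def K_def S_def by simp_all
  have demand: "S * q + g = X / K"
  proof -
    have "S * q + g = ((1 - \<tau>) * D + g * K) / K"
      using \<open>K \<noteq> 0\<close> \<open>S \<noteq> 0\<close> unfolding q_eq by (simp add: field_simps)
    also have "(1 - \<tau>) * D + g * K = X"
      unfolding D_def K_def X_def S_def by algebra
    finally show ?thesis .
  qed
  have markup: "p - m * w = \<alpha> * w * X / (N * D)"
    using \<open>N \<noteq> 0\<close> \<open>D \<noteq> 0\<close> unfolding p_eq X_def D_eq by (simp add: field_simps)
  have fixed_cost_eq: "N * F * K = N * m * (L - X) + \<alpha> * (1 - \<tau>) * L"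
    using labour unfolding K_def X_def S_def by algebra
  define E where "E = \<alpha> * L * g - S * (L - X)"
  have slack_num: "\<alpha> * X * L - N * F * K * S = N * m * E"
    using fixed_cost_eq unfolding E_def X_def by algebra
  have profit_num: "\<alpha> * X * X - N * F * K * D = K * E"
    using fixed_cost_eq unfolding E_def X_def D_def K_def S_def by algebra
  have "(S * q + g) * (p - m * w) - F * w = w * (\<alpha> * X * X - N * F * K * D) / (N * K * D)"
    using \<open>N \<noteq> 0\<close> \<open>K \<noteq> 0\<close> \<open>D \<noteq> 0\<close> unfolding demand markup by (simp add: field_simps)
  also have "\<dots> = w * (\<alpha> * X * L - N * F * K * S) / (N * m * N * D)"
    using \<open>m \<noteq> 0\<close> \<open>K \<noteq> 0\<close> unfolding slack_num profit_num by simp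
  also have "\<dots> = w * K * S / (N * m * D) * (\<alpha> * (S * q + g) * L / (S * N) - F)"
    using \<open>N \<noteq> 0\<close> \<open>m \<noteq> 0\<close> \<open>K \<noteq> 0\<close> \<open>S \<noteq> 0\<close> \<open>D \<noteq> 0\<close> unfolding demand
    by (simp add: field_simps)
  finally show ?thesis .
qed

theorem proposition4:
  fixes N m F \<alpha> w \<tau> g Lg :: real
  assumes "N > 0" and "m > 0" and "F > 0" and "\<alpha> > 0" and "w > 0"
    and "0 < \<tau>" and "\<tau> < 1" and "g \<ge> 0" and "Lg \<ge> 0"
    and "N * m > \<alpha>"
  shows "let L = N * ((1 - \<tau>) * (m * Lg + \<alpha> * F) + (m * g + F) * m * N)
                 / (\<alpha> + (N * m - \<alpha>) * \<tau>);
             q = (1 - \<tau>) * (L + Lg - \<alpha> * g)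
                 / ((N * m + \<alpha> * (1 - \<tau>)) * (L + Lg));
             p = (L + Lg) / (L + Lg - \<alpha> * g) * (m * w + \<alpha> * (1 - \<tau>) * w / N);
             \<Pi> = ((L + Lg) * q + g) * (p - m * w) - F * w
         in F \<le> \<alpha> * ((L + Lg) * q + g) * L / ((L + Lg) * N) \<longrightarrow> \<Pi> \<ge> 0"
proof -
  define L where "L = N * ((1 - \<tau>) * (m * Lg + \<alpha> * F) + (m * g + F) * m * N)
                        / (\<alpha> + (N * m - \<alpha>) * \<tau>)"
  have "\<alpha> + (N * m - \<alpha>) * \<tau> > 0"
    using assms by (simp add: add_pos_nonneg)
  then have labour: "L * (\<alpha> + (N * m - \<alpha>) * \<tau>)
                       = N * ((1 - \<tau>) * (m * Lg + \<alpha> * F) + (m * g + F) * m * N)"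
    unfolding L_def by simp
  have "L > N * m * g"
    using assms(1-4) _ _ assms(8-10) labour by (rule private_employment_gt) (use assms in simp_all)
  moreover have "N * m * g \<ge> \<alpha> * g" and "\<alpha> * g \<ge> 0"
    using assms by (simp_all add: mult_right_mono)
  ultimately have S_pos: "L + Lg > 0" and D_pos: "L + Lg - \<alpha> * g > 0"
    using \<open>Lg \<ge> 0\<close> by linarith+
  have K_pos: "N * m + \<alpha> * (1 - \<tau>) > 0"
    using assms by (simp add: add_pos_pos)
  show ?thesis
    unfolding Let_def L_def[symmetric]
    using S_pos D_pos K_pos assms
    by (subst profit_eq_fixed_cost_slack[OF _ _ _ _ _ labour, of w])
       (auto intro!: mult_nonneg_nonneg)
qed

end
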